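(* Let $G$ be an abelian group and $S\subseteq G$ a finite nonempty set that tiles $G$ by translation. Then every $S$-polychromatic coloring of $G$ with $|S|$ colors is also a $(-S)$-polychromatic coloring, where $-S=\{-s:s\in S\}$.
   Context: For $A\subseteq G$, a coloring of $G$ is $A$-polychromatic if every translate $n+A=\{n+a:a\in A\}$, $n\in G$, contains an element of each color. $S$ tiles $G$ by translation if there is $T\subseteq G$ with $S+T=G$ such that $s_1+t_1=s_2+t_2$ with $s_i\in S$, $t_i\in T$ implies $s_1=s_2$ and $t_1=t_2$. *)

theory Defs
  imports Main
begin

definition translate :: "'a::ab_group_add \<Rightarrow> 'a set \<Rightarrow> 'a set" where
  "translate n A = {n + a | a. a \<in> A}"

definition polychromatic :: "'b set \<Rightarrow> 'a::ab_group_add set \<Rightarrow> ('a \<Rightarrow> 'b) \<Rightarrow> bool" where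
  "polychromatic C A c \<longleftrightarrow> (\<forall>n. \<forall>k\<in>C. \<exists>x\<in>translate n A. c x = k)"

definition tiles :: "'a::ab_group_add set \<Rightarrow> bool" where
  "tiles S \<longleftrightarrow> (\<exists>T. (\<forall>g. \<exists>s\<in>S. \<exists>t\<in>T. g = s + t) \<and>
     (\<forall>s1\<in>S. \<forall>s2\<in>S. \<forall>t1\<in>T. \<forall>t2\<in>T. s1 + t1 = s2 + t2 \<longrightarrow> s1 = s2 \<and> t1 = t2))"

end

theory Submission
  imports Defs
begin

text \<open>With exactly \<open>|S|\<close> colours, an \<open>S\<close>-polychromatic colouring is injective on every
  translate \<open>n + S\<close>. Two points \<open>n - s\<^sub>1\<close>, \<open>n - s\<^sub>2\<close> of \<open>n - S\<close> both lie in the single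
  translate \<open>(n - s\<^sub>1 - s\<^sub>2) + S\<close>, so the colouring is injective on every translate of \<open>-S\<close>
  as well, and an injective map from a set of size \<open>|S|\<close> into the \<open>|S|\<close> colours hits
  every colour.\<close>

lemma translate_eq_image: "translate n A = (+) n ` A"
  unfolding translate_def by auto

lemma card_translate: "card (translate n A) = card A"
  unfolding translate_eq_image by (simp add: card_image)

lemma polychromatic_imp_image_translate_eq:
  assumes "polychromatic C A c" and "\<forall>x. c x \<in> C"
  shows "c ` translate n A = C"
  using assms unfolding polychromatic_def by fastforce

lemma polychromatic_imp_inj_on_translate:
  assumes "finite A" and "card C = card A" and "\<forall>x. c x \<in> C"
    and "polychromatic C A c"
  shows "inj_on c (translate n A)"
proof -
  have "card (c ` translate n A) = card (translate n A)"
    using polychromatic_imp_image_translate_eq[OF assms(4,3)] assms(2)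
    by (simp add: card_translate)
  moreover have "finite (translate n A)"
    using assms(1) by (simp add: translate_eq_image)
  ultimately show ?thesis
    by (simp add: eq_card_imp_inj_on)
qed

lemma inj_on_translate_imp_polychromatic:
  assumes "finite C" and "card A = card C" and "\<forall>x. c x \<in> C"
    and "\<And>n. inj_on c (translate n A)"
  shows "polychromatic C A c"
  unfolding polychromatic_def
proof (intro allI ballI)
  fix n k assume "k \<in> C"
  have "c ` translate n A \<subseteq> C"
    using assms(3) by blast
  moreover have "card (c ` translate n A) = card C"
    using assms(2,4) by (simp add: card_image card_translate)
  ultimately have "c ` translate n A = C"
    using assms(1) by (simp add: card_subset_eq)
  with \<open>k \<in> C\<close> show "\<exists>x\<in>translate n A. c x = k"
    by blast
qed

lemma inj_on_translate_uminus:
  fixes A :: "'a::ab_group_add set"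
  assumes "\<And>m. inj_on c (translate m A)"
  shows "inj_on c (translate n (uminus ` A))"
proof (rule inj_onI)
  fix x y assume "x \<in> translate n (uminus ` A)" "y \<in> translate n (uminus ` A)" "c x = c y"
  then obtain s\<^sub>1 s\<^sub>2 where s: "s\<^sub>1 \<in> A" "s\<^sub>2 \<in> A" "x = n - s\<^sub>1" "y = n - s\<^sub>2"
    unfolding translate_eq_image by auto
  let ?m = "n - s\<^sub>1 - s\<^sub>2"
  have "x = ?m + s\<^sub>2" "y = ?m + s\<^sub>1"
    using s by (simp_all add: algebra_simps)
  with s have "x \<in> translate ?m A" "y \<in> translate ?m A"
    unfolding translate_eq_image by auto
  with assms \<open>c x = c y\<close> show "x = y"
    by (meson inj_onD)
qed

theorem corollary15:
  fixes S :: "'a::ab_group_add set" and c :: "'a \<Rightarrow> 'b" and C :: "'b set"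
  assumes "finite S" and "S \<noteq> {}" and "tiles S"
    and "finite C" and "card C = card S" and "\<forall>x. c x \<in> C"
    and "polychromatic C S c"
  shows "polychromatic C (uminus ` S) c"
proof (rule inj_on_translate_imp_polychromatic)
  show "finite C" "\<forall>x. c x \<in> C"
    using assms(4,6) .
  show "card (uminus ` S) = card C"
    using assms(5) by (simp add: card_image)
  fix n
  show "inj_on c (translate n (uminus ` S))"
    using polychromatic_imp_inj_on_translate[OF assms(1,5,6,7)]
    by (rule inj_on_translate_uminus)
qed

end
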